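(* Let $\mathbb{L}$ be an algebraically closed field, $a\in\mathbb{L}^{\times}$, $\Bbbk=\mathbb{L}(x)$ the field of rational functions, and $\sigma$ the automorphism of $\Bbbk$ which is the identity on $\mathbb{L}$ and sends $x\mapsto x+a$. Let $G_\sigma=\{\frac{r}{\sigma(r)}: r\in\Bbbk^\times\}$. Consider the group isomorphism $\mathbb{L}(x)^{\times}\to \mathbb{L}^{\times}\times \mathrm{Fsfun}(\mathbb{L},\mathbb{Z})$, $\alpha\mapsto (c_\alpha,\mathtt{m}_\alpha)$. Then the restriction of this isomorphism to $G_\sigma$ is an isomorphism of $G_\sigma$ onto $\{1\}\times\mathrm{Fsfun}_\sigma(\mathbb{L},\mathbb{Z})$; in other words, $\beta\mapsto \mathtt{m}_\beta$ defines a group isomorphism $G_\sigma\cong \mathrm{Fsfun}_\sigma(\mathbb{L},\mathbb{Z})$.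
   Context: Every $\alpha\in\mathbb{L}(x)^{\times}$ can be uniquely written as $\alpha=c_\alpha\prod_{t\in\mathbb{L}}(x-t)^{\mathtt{m}_\alpha(t)}$ with $c_\alpha\in\mathbb{L}^{\times}$ and $\mathtt{m}_\alpha:\mathbb{L}\to\mathbb{Z}$ a function with finite support (i.e. $\mathtt{m}_\alpha(t)\neq 0$ for only finitely many $t$). $\mathrm{Fsfun}(\mathbb{L},\mathbb{Z})$ denotes the additive group of all functions $\mathbb{L}\to\mathbb{Z}$ with finite support, and $\mathrm{Fsfun}_\sigma(\mathbb{L},\mathbb{Z})$ denotes its subgroup of those $\mathtt{m}$ such that $\sum_{i\in\mathbb{Z}}\mathtt{m}(t+ia)=0$ for every $t\in\mathbb{L}$. *)

theory Defs
  imports "HOL-Computational_Algebra.Polynomial" "HOL-Computational_Algebra.Fraction_Field"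
begin

text \<open>The rational function field L(x) is modelled as the fraction field of L[x].\<close>

definition rf_const :: "'a::field \<Rightarrow> 'a poly fract" where
  "rf_const c = Fract [:c:] 1"

definition rf_X :: "'a::field poly fract" where
  "rf_X = Fract [:0, 1:] 1"

definition rf_shift :: "'a::field \<Rightarrow> 'a poly fract \<Rightarrow> 'a poly fract" where
  "rf_shift a r = (THE s. \<exists>p q. q \<noteq> 0 \<and> r = Fract p q \<and>
                         s = Fract (pcompose p [:a, 1:]) (pcompose q [:a, 1:]))"

definition rf_decomp :: "'a::field poly fract \<Rightarrow> 'a \<Rightarrow> ('a \<Rightarrow> int) \<Rightarrow> bool" where
  "rf_decomp \<alpha> c m \<longleftrightarrow> c \<noteq> 0 \<and> finite {t. m t \<noteq> 0} \<and>
      \<alpha> = rf_const c * (\<Prod>t\<in>{t. m t \<noteq> 0}. (rf_X - rf_const t) powi (m t))"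

definition rf_coef :: "'a::field poly fract \<Rightarrow> 'a" where
  "rf_coef \<alpha> = (THE c. \<exists>m. rf_decomp \<alpha> c m)"

definition rf_mult :: "'a::field poly fract \<Rightarrow> 'a \<Rightarrow> int" where
  "rf_mult \<alpha> = (THE m. \<exists>c. rf_decomp \<alpha> c m)"

definition G_sigma :: "'a::field \<Rightarrow> 'a poly fract set" where
  "G_sigma a = {r / rf_shift a r | r. r \<noteq> 0}"

definition Fsfun :: "('a \<Rightarrow> int) set" where
  "Fsfun = {m. finite {t. m t \<noteq> 0}}"

definition Fsfun_sigma :: "'a::field \<Rightarrow> ('a \<Rightarrow> int) set" where
  "Fsfun_sigma a = {m \<in> Fsfun. \<forall>t.
      sum m ({s. \<exists>i::int. s = t + of_int i * a} \<inter> {s. m s \<noteq> 0}) = 0}"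

end

theory Submission
  imports Defs "HOL-Computational_Algebra.Polynomial_Factorial"
begin

(* Over an algebraically closed field every nonzero rational function factors as
   c * prod_t (x - t)^(m t), and the factorization is unique: splitting m into its positive
   and negative parts turns an equation between two factorizations into an equation between
   two polynomials with disjoint roots. The shift sigma fixes c and replaces m by m(. + a),
   so r / sigma(r) has constant 1 and multiplicity function n - n(. + a), a coboundary of
   the shift. Conversely, a finitely supported m whose sums over all orbits t + Z a vanish is
   such a coboundary: if t is in the support, so is some other point s of its orbit, and
   subtracting m(t) times the coboundary 1_t - 1_s removes t from the support without
   changing the orbit sums. Hence G_sigma is the image of Fsfun_sigma under
   m |-> prod_t (x - t)^(m t), which turns sums into products and is inverted by
   beta |-> (c_beta, m_beta). *)

definition supp :: "('b \<Rightarrow> int) \<Rightarrow> 'b set" where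
  "supp m = {t. m t \<noteq> 0}"

lemma finite_supp_add:
  "finite (supp m) \<Longrightarrow> finite (supp n) \<Longrightarrow> finite (supp (\<lambda>t. m t + n t))"
  by (rule finite_subset[of _ "supp m \<union> supp n"]) (auto simp: supp_def)

lemma supp_uminus [simp]: "supp (\<lambda>t. - m t) = supp m"
  by (simp add: supp_def)

lemma supp_shift: "supp (\<lambda>s. n (s + a)) = (\<lambda>t. t - a) ` supp (n :: 'a::ab_group_add \<Rightarrow> int)"
  by (auto simp: supp_def image_iff intro!: exI[of _ "_ + a"])

lemma sum_Int_supp_superset:
  "finite F \<Longrightarrow> supp m \<subseteq> F \<Longrightarrow> sum m (A \<inter> supp m) = sum m (A \<inter> F)"
  by (rule sum.mono_neutral_left) (auto simp: supp_def)

definition rf_monic :: "('a::field \<Rightarrow> int) \<Rightarrow> 'a poly fract" where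
  "rf_monic m = (\<Prod>t\<in>supp m. (rf_X - rf_const t) powi m t)"

lemma rf_decomp_iff:
  "rf_decomp \<alpha> c m \<longleftrightarrow> c \<noteq> 0 \<and> finite (supp m) \<and> \<alpha> = rf_const c * rf_monic m"
  unfolding rf_decomp_def rf_monic_def supp_def ..

lemma rf_const_eq: "rf_const c = to_fract [:c:]"
  by (simp add: rf_const_def to_fract_def)

lemma rf_X_minus_const_eq: "rf_X - rf_const t = to_fract [:-t, 1:]"
  by (simp add: rf_X_def rf_const_def to_fract_def)

lemma rf_const_mult: "rf_const (c * d) = rf_const c * rf_const d"
  unfolding rf_const_eq to_fract_mult[symmetric] mult_to_poly ..

lemma rf_const_inverse: "rf_const (inverse c) = inverse (rf_const c)"
  by (cases "c = 0") (simp_all add: rf_const_def eq_fract Zero_fract_def mult_to_poly)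

lemma to_fract_power: "to_fract (p ^ n) = to_fract p ^ n"
  by (induction n) simp_all

lemma to_fract_prod: "to_fract (\<Prod>t\<in>A. f t) = (\<Prod>t\<in>A. to_fract (f t))"
  by (induction A rule: infinite_finite_induct) simp_all

lemma rf_monic_superset:
  assumes "finite F" "supp m \<subseteq> F"
  shows "rf_monic m = (\<Prod>t\<in>F. (rf_X - rf_const t) powi m t)"
  unfolding rf_monic_def using assms by (intro prod.mono_neutral_left) (auto simp: supp_def)

lemma rf_monic_zero [simp]: "rf_monic (\<lambda>t. 0) = 1"
  by (simp add: rf_monic_def supp_def)

lemma rf_monic_nonzero: "rf_monic m \<noteq> 0"
  by (cases "finite (supp m)") (simp_all add: rf_monic_def rf_X_minus_const_eq prod_zero_iff)

lemma rf_monic_add: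
  assumes "finite (supp m)" "finite (supp n)"
  shows "rf_monic (\<lambda>t. m t + n t) = rf_monic m * rf_monic n"
proof -
  let ?F = "supp m \<union> supp n"
  have "rf_monic (\<lambda>t. m t + n t) = (\<Prod>t\<in>?F. (rf_X - rf_const t) powi (m t + n t))"
    using assms by (intro rf_monic_superset) (auto simp: supp_def)
  also have "\<dots> = (\<Prod>t\<in>?F. (rf_X - rf_const t) powi m t * (rf_X - rf_const t) powi n t)"
    by (intro prod.cong refl power_int_add) (simp add: rf_X_minus_const_eq)
  also have "\<dots> = rf_monic m * rf_monic n"
    using assms by (simp add: prod.distrib rf_monic_superset[of ?F])
  finally show ?thesis .
qed

lemma rf_monic_uminus: "rf_monic (\<lambda>t. - m t) = inverse (rf_monic m)"
  by (simp add: rf_monic_def power_int_minus prod_inversef[symmetric] comp_def)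

lemma rf_monic_nonneg:
  assumes "\<And>t. m t \<ge> 0"
  shows "rf_monic m = to_fract (\<Prod>t\<in>supp m. [:-t, 1:] ^ nat (m t))"
  unfolding rf_monic_def to_fract_prod to_fract_power rf_X_minus_const_eq
  using assms by (intro prod.cong refl) (simp add: power_int_def)

lemma rf_decomp_mult:
  assumes "rf_decomp \<alpha> c m" "rf_decomp \<beta> d n"
  shows "rf_decomp (\<alpha> * \<beta>) (c * d) (\<lambda>t. m t + n t)"
  using assms by (auto simp: rf_decomp_iff rf_monic_add finite_supp_add rf_const_mult)

lemma rf_decomp_inverse:
  assumes "rf_decomp \<alpha> c m"
  shows "rf_decomp (inverse \<alpha>) (inverse c) (\<lambda>t. - m t)"
  using assms by (auto simp: rf_decomp_iff rf_monic_uminus rf_const_inverse)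

lemma rf_decomp_const: "c \<noteq> 0 \<Longrightarrow> rf_decomp (to_fract [:c:]) c (\<lambda>t. 0)"
  by (simp add: rf_decomp_iff rf_const_eq supp_def)

lemma rf_decomp_1_iff: "rf_decomp \<alpha> 1 m \<longleftrightarrow> finite (supp m) \<and> \<alpha> = rf_monic m"
  by (simp add: rf_decomp_iff rf_const_eq pCons_one)

lemma rf_decomp_rf_monic: "finite (supp m) \<Longrightarrow> rf_decomp (rf_monic m) 1 m"
  by (simp add: rf_decomp_1_iff)

lemma rf_decomp_linear: "rf_decomp (to_fract [:-t, 1:]) 1 (\<lambda>s. of_bool (s = t))"
proof -
  have "supp (\<lambda>s. of_bool (s = t) :: int) = {t}"
    by (auto simp: supp_def)
  then show ?thesis
    by (simp add: rf_decomp_iff rf_monic_def rf_X_def rf_const_def to_fract_def)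
qed

lemma rf_decomp_nonzero: "rf_decomp \<alpha> c m \<Longrightarrow> \<alpha> \<noteq> 0"
  by (simp add: rf_decomp_iff rf_const_eq rf_monic_nonzero)

lemma rf_decomp_poly:
  fixes p :: "'a::field poly"
  assumes alg_closed: "\<And>p :: 'a poly. degree p > 0 \<Longrightarrow> \<exists>z. poly p z = 0"
    and "p \<noteq> 0"
  shows "\<exists>c m. rf_decomp (to_fract p) c m"
  using \<open>p \<noteq> 0\<close>
proof (induction "degree p" arbitrary: p rule: less_induct)
  case less
  show ?case
  proof (cases "degree p = 0")
    case True
    then obtain c where "p = [:c:]"
      by (metis degree_eq_zeroE)
    with less.prems show ?thesis
      using rf_decomp_const by auto
  next
    case False
    then obtain z where "poly p z = 0"
      using alg_closed by blast
    then obtain q where p: "p = [:-z, 1:] * q"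
      by (metis poly_eq_0_iff_dvd dvdE)
    with less.prems have "q \<noteq> 0"
      by auto
    then have "degree p = 1 + degree q"
      unfolding p by (subst degree_mult_eq) auto
    then obtain c m where "rf_decomp (to_fract q) c m"
      using less.hyps[of q] \<open>q \<noteq> 0\<close> by auto
    then have "rf_decomp (to_fract p) (1 * c) (\<lambda>t. of_bool (t = z) + m t)"
      unfolding p to_fract_mult by (intro rf_decomp_mult rf_decomp_linear)
    then show ?thesis
      by blast
  qed
qed

lemma rf_decomp_exists:
  fixes \<alpha> :: "'a::field poly fract"
  assumes alg_closed: "\<And>p :: 'a poly. degree p > 0 \<Longrightarrow> \<exists>z. poly p z = 0"
    and "\<alpha> \<noteq> 0"
  shows "\<exists>c m. rf_decomp \<alpha> c m"
proof -
  obtain p q where \<alpha>: "\<alpha> = to_fract p * inverse (to_fract q)" and "q \<noteq> 0"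
    by (cases \<alpha>) (simp add: Fract_conv_to_fract divide_inverse)
  with \<open>\<alpha> \<noteq> 0\<close> have "p \<noteq> 0"
    by auto
  obtain c m d n where "rf_decomp (to_fract p) c m" "rf_decomp (to_fract q) d n"
    using rf_decomp_poly[OF alg_closed] \<open>p \<noteq> 0\<close> \<open>q \<noteq> 0\<close> by metis
  then have "rf_decomp \<alpha> (c * inverse d) (\<lambda>t. m t + - n t)"
    unfolding \<alpha> by (intro rf_decomp_mult rf_decomp_inverse)
  then show ?thesis
    by blast
qed

lemma poly_prod_linear_eq_0_iff:
  fixes t :: "'a::field"
  assumes "finite A"
  shows "poly (\<Prod>s\<in>A. [:-s, 1:] ^ k s) t = 0 \<longleftrightarrow> t \<in> A \<and> k t > 0"
  using assms by (auto simp: poly_prod prod_zero_iff)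

lemma smult_prod_linear_eq_prod_linear:
  fixes c :: "'a::field"
  assumes "finite A" "finite B" "A \<inter> B = {}" "\<forall>t\<in>A. k t > 0" "\<forall>t\<in>B. l t > 0" "c \<noteq> 0"
    and eq: "smult c (\<Prod>s\<in>A. [:-s, 1:] ^ k s) = (\<Prod>s\<in>B. [:-s, 1:] ^ l s)"
  shows "A = {} \<and> B = {} \<and> c = 1"
proof -
  have "poly (smult c (\<Prod>s\<in>A. [:-s, 1:] ^ k s)) t = 0 \<longleftrightarrow> t \<in> A"
    and "poly (\<Prod>s\<in>B. [:-s, 1:] ^ l s) t = 0 \<longleftrightarrow> t \<in> B" for t
    using assms(1,2,4-6) by (auto simp: poly_prod_linear_eq_0_iff)
  then have "A = B"
    unfolding eq by auto
  with assms(3) have "A = {}" "B = {}"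
    by blast+
  with eq show ?thesis
    by (simp add: one_pCons)
qed

lemma rf_decomp_one:
  assumes "rf_decomp 1 c d"
  shows "c = 1 \<and> d = (\<lambda>t. 0)"
proof -
  define dp dn where "dp t = max (d t) 0" and "dn t = max (- d t) 0" for t
  define P Q where "P = (\<Prod>t\<in>supp dp. [:-t, 1:] ^ nat (dp t))"
    and "Q = (\<Prod>t\<in>supp dn. [:-t, 1:] ^ nat (dn t))"
  from assms have "c \<noteq> 0" and "finite (supp d)"
    by (simp_all add: rf_decomp_iff)
  then have fin: "finite (supp dp)" "finite (supp dn)"
    by (auto simp: supp_def dp_def dn_def elim!: rev_finite_subset)
  have d_split: "d = (\<lambda>t. dp t + - dn t)"
    by (auto simp: dp_def dn_def)
  have "rf_monic d = rf_monic dp * rf_monic (\<lambda>t. - dn t)"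
    unfolding d_split using fin by (intro rf_monic_add) simp_all
  also have "\<dots> = to_fract P * inverse (to_fract Q)"
    unfolding P_def Q_def rf_monic_uminus
    by (subst (1 2) rf_monic_nonneg) (simp_all add: dp_def dn_def)
  finally have "rf_monic d = to_fract P * inverse (to_fract Q)" .
  with assms have "to_fract [:c:] * (to_fract P * inverse (to_fract Q)) = 1"
    by (simp add: rf_decomp_iff rf_const_eq)
  moreover have "Q \<noteq> 0"
    using fin by (simp add: Q_def prod_zero_iff)
  ultimately have "to_fract P * to_fract [:c:] = to_fract Q"
    by (simp add: field_simps)
  then have "smult c P = Q"
    by (simp only: to_fract_mult[symmetric] to_fract_eq_iff) simp
  then have "supp dp = {} \<and> supp dn = {} \<and> c = 1"
    unfolding P_def Q_def using fin \<open>c \<noteq> 0\<close>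
    by (intro smult_prod_linear_eq_prod_linear) (auto simp: supp_def dp_def dn_def)
  then show ?thesis
    by (auto simp: d_split supp_def)
qed

lemma rf_decomp_unique:
  assumes "rf_decomp \<alpha> c m" "rf_decomp \<alpha> c' m'"
  shows "c = c' \<and> m = m'"
proof -
  have "rf_decomp (\<alpha> * inverse \<alpha>) (c * inverse c') (\<lambda>t. m t + - m' t)"
    using assms by (intro rf_decomp_mult rf_decomp_inverse)
  then have "rf_decomp 1 (c * inverse c') (\<lambda>t. m t + - m' t)"
    using rf_decomp_nonzero[OF assms(1)] by simp
  moreover have "c' \<noteq> 0"
    using assms(2) by (simp add: rf_decomp_iff)
  ultimately show ?thesis
    by (auto dest!: rf_decomp_one simp: field_simps fun_eq_iff)
qed

lemma rf_coef_eq: "rf_decomp \<alpha> c m \<Longrightarrow> rf_coef \<alpha> = c"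
  unfolding rf_coef_def by (blast dest: rf_decomp_unique)

lemma rf_mult_eq: "rf_decomp \<alpha> c m \<Longrightarrow> rf_mult \<alpha> = m"
  unfolding rf_mult_def by (blast dest: rf_decomp_unique)

lemma rf_coef_rf_monic: "finite (supp m) \<Longrightarrow> rf_coef (rf_monic m) = 1"
  by (rule rf_coef_eq[OF rf_decomp_rf_monic])

lemma rf_mult_rf_monic: "finite (supp m) \<Longrightarrow> rf_mult (rf_monic m) = m"
  by (rule rf_mult_eq[OF rf_decomp_rf_monic])

lemma rf_shift_Fract:
  fixes a :: "'a::field"
  assumes "q \<noteq> 0"
  shows "rf_shift a (Fract p q) = Fract (p \<circ>\<^sub>p [:a, 1:]) (q \<circ>\<^sub>p [:a, 1:])"
  unfolding rf_shift_def
proof (rule the_equality)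
  show "\<exists>p' q'. q' \<noteq> 0 \<and> Fract p q = Fract p' q' \<and>
      Fract (p \<circ>\<^sub>p [:a, 1:]) (q \<circ>\<^sub>p [:a, 1:]) = Fract (p' \<circ>\<^sub>p [:a, 1:]) (q' \<circ>\<^sub>p [:a, 1:])"
    using assms by blast
next
  fix s
  assume "\<exists>p' q'. q' \<noteq> 0 \<and> Fract p q = Fract p' q' \<and>
      s = Fract (p' \<circ>\<^sub>p [:a, 1:]) (q' \<circ>\<^sub>p [:a, 1:])"
  then obtain p' q' where "q' \<noteq> 0" "Fract p q = Fract p' q'"
    and s: "s = Fract (p' \<circ>\<^sub>p [:a, 1:]) (q' \<circ>\<^sub>p [:a, 1:])"
    by blast
  with assms have "p * q' = p' * q"
    by (simp add: eq_fract)
  then have "(p \<circ>\<^sub>p [:a, 1:]) * (q' \<circ>\<^sub>p [:a, 1:]) = (p' \<circ>\<^sub>p [:a, 1:]) * (q \<circ>\<^sub>p [:a, 1:])"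
    by (simp flip: pcompose_mult)
  then show "s = Fract (p \<circ>\<^sub>p [:a, 1:]) (q \<circ>\<^sub>p [:a, 1:])"
    using assms \<open>q' \<noteq> 0\<close> s by (simp add: eq_fract pcompose_eq_0_iff)
qed

lemma rf_shift_to_fract: "rf_shift a (to_fract p) = to_fract (p \<circ>\<^sub>p [:a::'a::field, 1:])"
  by (simp add: to_fract_def rf_shift_Fract pcompose_1)

lemma rf_shift_mult: "rf_shift a (x * y) = rf_shift a x * rf_shift (a::'a::field) y"
  by (cases x, cases y) (simp add: rf_shift_Fract pcompose_mult)

lemma rf_shift_inverse: "rf_shift a (inverse x) = inverse (rf_shift (a::'a::field) x)"
proof (cases x)
  case (Fract p q)
  then show ?thesis
    by (cases "p = 0") (simp_all add: rf_shift_Fract Zero_fract_def eq_fract pcompose_eq_0_iff)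
qed

lemma rf_shift_1 [simp]: "rf_shift a 1 = (1 :: 'a::field poly fract)"
  using rf_shift_to_fract[of a 1] by (simp add: pcompose_1)

lemma rf_shift_prod: "rf_shift a (\<Prod>t\<in>A. f t) = (\<Prod>t\<in>A. rf_shift (a::'a::field) (f t))"
  by (induction A rule: infinite_finite_induct) (simp_all add: rf_shift_mult)

lemma rf_shift_power_int: "rf_shift a (x powi n) = rf_shift (a::'a::field) x powi n"
proof -
  have "rf_shift a (y ^ k) = rf_shift a y ^ k" for y k
    by (induction k) (simp_all add: rf_shift_mult)
  then show ?thesis
    by (simp add: power_int_def rf_shift_inverse)
qed

lemma rf_shift_rf_monic:
  fixes a :: "'a::field"
  shows "rf_shift a (rf_monic n) = rf_monic (\<lambda>s. n (s + a))"
proof -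
  have "rf_shift a (rf_monic n) = (\<Prod>t\<in>supp n. to_fract [:-(t - a), 1:] powi n t)"
    by (simp add: rf_monic_def rf_shift_prod rf_shift_power_int rf_X_minus_const_eq
        rf_shift_to_fract pcompose_pCons)
  also have "\<dots> = rf_monic (\<lambda>s. n (s + a))"
    unfolding rf_monic_def rf_X_minus_const_eq
    by (rule prod.reindex_bij_witness[of _ "\<lambda>s. s + a" "\<lambda>t. t - a"]) (auto simp: supp_def)
  finally show ?thesis .
qed

lemma rf_decomp_shift:
  fixes a :: "'a::field"
  assumes "rf_decomp r c n"
  shows "rf_decomp (rf_shift a r) c (\<lambda>s. n (s + a))"
  using assms by (simp add: rf_decomp_iff supp_shift rf_shift_mult rf_shift_rf_monic
      rf_const_eq rf_shift_to_fract pcompose_pCons)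

lemma rf_decomp_shift_quotient:
  fixes a :: "'a::field"
  assumes "rf_decomp r c n"
  shows "rf_decomp (r / rf_shift a r) 1 (\<lambda>s. n s - n (s + a))"
proof -
  have "rf_decomp (r * inverse (rf_shift a r)) (c * inverse c) (\<lambda>s. n s + - n (s + a))"
    using assms by (intro rf_decomp_mult rf_decomp_inverse rf_decomp_shift)
  moreover have "c \<noteq> 0"
    using assms by (simp add: rf_decomp_iff)
  ultimately show ?thesis
    by (simp add: divide_inverse)
qed

definition shift_orbit :: "'a::ring_1 \<Rightarrow> 'a \<Rightarrow> 'a set" where
  "shift_orbit a t = {s. \<exists>i::int. s = t + of_int i * a}"

lemma shift_orbit_self: "t \<in> shift_orbit a t"
  unfolding shift_orbit_def by (auto intro: exI[of _ 0])

lemma shift_orbit_add_iff: "t + of_int j * a \<in> shift_orbit a u \<longleftrightarrow> t \<in> shift_orbit a u"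
proof -
  have "t + of_int j * a = u + of_int i * a \<longleftrightarrow> t = u + of_int (i - j) * a" for i
    by (auto simp: algebra_simps)
  then show ?thesis
    unfolding shift_orbit_def by (auto intro: exI[of _ "_ - j"] exI[of _ "_ + j"])
qed

lemma Fsfun_sigma_iff:
  "m \<in> Fsfun_sigma a \<longleftrightarrow> finite (supp m) \<and> (\<forall>u. sum m (shift_orbit a u \<inter> supp m) = 0)"
  unfolding Fsfun_sigma_def Fsfun_def shift_orbit_def supp_def by simp

lemma Fsfun_sigma_iff_superset:
  assumes "finite F" "supp m \<subseteq> F"
  shows "m \<in> Fsfun_sigma a \<longleftrightarrow> (\<forall>u. sum m (shift_orbit a u \<inter> F) = 0)"
  using assms by (simp add: Fsfun_sigma_iff sum_Int_supp_superset finite_subset)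

lemma Fsfun_sigma_add:
  assumes "m \<in> Fsfun_sigma a" "m' \<in> Fsfun_sigma a"
  shows "(\<lambda>s. m s + m' s) \<in> Fsfun_sigma a"
proof -
  let ?F = "supp m \<union> supp m'"
  have "finite ?F"
    using assms by (simp add: Fsfun_sigma_iff)
  moreover have "supp m \<subseteq> ?F" "supp m' \<subseteq> ?F" "supp (\<lambda>s. m s + m' s) \<subseteq> ?F"
    by (auto simp: supp_def)
  ultimately show ?thesis
    using assms Fsfun_sigma_iff_superset[of ?F] by (simp add: sum.distrib)
qed

lemma Fsfun_sigma_mult:
  assumes "m \<in> Fsfun_sigma a"
  shows "(\<lambda>s. k * m s) \<in> Fsfun_sigma a"
proof -
  have "finite (supp m)" "supp (\<lambda>s. k * m s) \<subseteq> supp m"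
    using assms by (auto simp: Fsfun_sigma_iff supp_def)
  then show ?thesis
    using assms by (simp add: Fsfun_sigma_iff_superset flip: sum_distrib_left)
qed

lemma Fsfun_sigma_ex_other_in_orbit:
  assumes "m \<in> Fsfun_sigma a" "t \<in> supp m"
  obtains i where "t + of_int i * a \<in> supp m" "t + of_int i * a \<noteq> t"
proof -
  have "shift_orbit a t \<inter> supp m \<noteq> {t}"
  proof
    assume "shift_orbit a t \<inter> supp m = {t}"
    moreover have "sum m (shift_orbit a t \<inter> supp m) = 0"
      using assms(1) by (simp add: Fsfun_sigma_iff)
    ultimately show False
      using assms(2) by (simp add: supp_def)
  qed
  then show ?thesis
    using that assms(2) shift_orbit_self[of t a] unfolding shift_orbit_def by blast
qed

definition is_coboundary :: "'a::ab_group_add \<Rightarrow> ('a \<Rightarrow> int) \<Rightarrow> bool" where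
  "is_coboundary a m \<longleftrightarrow> (\<exists>n. finite (supp n) \<and> m = (\<lambda>s. n s - n (s + a)))"

lemma is_coboundary_0: "is_coboundary a (\<lambda>s. 0)"
  unfolding is_coboundary_def by (intro exI[of _ "\<lambda>s. 0"]) (simp add: supp_def)

lemma is_coboundary_add:
  assumes "is_coboundary a m" "is_coboundary a m'"
  shows "is_coboundary a (\<lambda>s. m s + m' s)"
proof -
  obtain n n' where "finite (supp n)" "m = (\<lambda>s. n s - n (s + a))"
    and "finite (supp n')" "m' = (\<lambda>s. n' s - n' (s + a))"
    using assms unfolding is_coboundary_def by blast
  then show ?thesis
    unfolding is_coboundary_def
    by (intro exI[of _ "\<lambda>s. n s + n' s"]) (auto simp: finite_supp_add)
qed

lemma is_coboundary_mult:
  assumes "is_coboundary a m"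
  shows "is_coboundary a (\<lambda>s. k * m s)"
proof -
  obtain n where "finite (supp n)" "m = (\<lambda>s. n s - n (s + a))"
    using assms unfolding is_coboundary_def by blast
  moreover have "supp (\<lambda>s. k * n s) \<subseteq> supp n"
    by (auto simp: supp_def)
  ultimately show ?thesis
    unfolding is_coboundary_def
    by (intro exI[of _ "\<lambda>s. k * n s"]) (auto simp: right_diff_distrib elim: finite_subset)
qed

lemma is_coboundary_step: "is_coboundary a (\<lambda>s. of_bool (s = u) - of_bool (s = u + a))"
  unfolding is_coboundary_def
  by (intro exI[of _ "\<lambda>s. - of_bool (s = u + a)"]) (auto simp: supp_def fun_eq_iff)

lemma is_coboundary_delta_diff:
  fixes a t :: "'a::ring_1"
  shows "is_coboundary a (\<lambda>s. of_bool (s = t) - of_bool (s = t + of_int i * a))"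
proof (induction i rule: int_induct[where k = 0])
  case base
  show ?case
    using is_coboundary_0 by simp
next
  case (step1 i)
  have "is_coboundary a (\<lambda>s. (of_bool (s = t) - of_bool (s = t + of_int i * a))
      + (of_bool (s = t + of_int i * a) - of_bool (s = t + of_int i * a + a)))"
    using step1.IH is_coboundary_step by (rule is_coboundary_add)
  then show ?case
    by (simp add: algebra_simps)
next
  case (step2 i)
  have "is_coboundary a (\<lambda>s. (of_bool (s = t) - of_bool (s = t + of_int i * a))
      + (-1) * (of_bool (s = t + of_int (i - 1) * a) - of_bool (s = t + of_int (i - 1) * a + a)))"
    using step2.IH is_coboundary_mult[OF is_coboundary_step] by (rule is_coboundary_add)
  then show ?case
    by (simp add: algebra_simps)
qed

lemma sum_shift_orbit_shift:
  fixes a :: "'a::ring_1"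
  shows "sum (\<lambda>s. n (s + a)) (shift_orbit a u \<inter> supp (\<lambda>s. n (s + a))) = sum n (shift_orbit a u \<inter> supp n)"
proof -
  let ?X = "shift_orbit a u \<inter> supp (\<lambda>s. n (s + a))"
  have "(\<lambda>s. s + a) ` ?X = shift_orbit a u \<inter> supp n"
  proof (intro equalityI subsetI)
    fix x
    assume "x \<in> (\<lambda>s. s + a) ` ?X"
    then show "x \<in> shift_orbit a u \<inter> supp n"
      using shift_orbit_add_iff[of _ 1 a u] by (auto simp: supp_def)
  next
    fix x
    assume "x \<in> shift_orbit a u \<inter> supp n"
    then have "x - a \<in> ?X"
      using shift_orbit_add_iff[of x "-1" a u] by (simp add: supp_def)
    then show "x \<in> (\<lambda>s. s + a) ` ?X"
      by (rule rev_image_eqI) simp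
  qed
  then have "sum n (shift_orbit a u \<inter> supp n) = sum n ((\<lambda>s. s + a) ` ?X)"
    by simp
  also have "\<dots> = sum (\<lambda>s. n (s + a)) ?X"
    by (simp add: sum.reindex)
  finally show ?thesis ..
qed

lemma is_coboundary_imp_Fsfun_sigma:
  fixes a :: "'a::field"
  assumes "is_coboundary a m"
  shows "m \<in> Fsfun_sigma a"
proof -
  obtain n where fin: "finite (supp n)" and m: "m = (\<lambda>s. n s - n (s + a))"
    using assms unfolding is_coboundary_def by blast
  define F where "F = supp n \<union> supp (\<lambda>s. n (s + a))"
  have "finite F"
    using fin by (simp add: F_def supp_shift)
  moreover have "supp m \<subseteq> F"
    by (auto simp: m F_def supp_def)
  moreover have "sum m (shift_orbit a u \<inter> F) = 0" for u
  proof -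
    have "sum m (shift_orbit a u \<inter> F) =
        sum n (shift_orbit a u \<inter> F) - sum (\<lambda>s. n (s + a)) (shift_orbit a u \<inter> F)"
      by (simp add: m sum_subtractf)
    also have "\<dots> = sum n (shift_orbit a u \<inter> supp n)
        - sum (\<lambda>s. n (s + a)) (shift_orbit a u \<inter> supp (\<lambda>s. n (s + a)))"
      using \<open>finite F\<close> sum_Int_supp_superset[of F n] sum_Int_supp_superset[of F "\<lambda>s. n (s + a)"]
      by (simp add: F_def)
    finally show ?thesis
      by (simp add: sum_shift_orbit_shift)
  qed
  ultimately show ?thesis
    by (simp add: Fsfun_sigma_iff_superset)
qed

lemma Fsfun_sigma_imp_is_coboundary:
  fixes a :: "'a::field"
  assumes "m \<in> Fsfun_sigma a"
  shows "is_coboundary a m"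
  using assms
proof (induction "card (supp m)" arbitrary: m rule: less_induct)
  case less
  show ?case
  proof (cases "supp m = {}")
    case True
    then have "m = (\<lambda>s. 0)"
      by (auto simp: supp_def)
    then show ?thesis
      using is_coboundary_0 by simp
  next
    case False
    then obtain t where t: "t \<in> supp m"
      by blast
    with less.prems obtain i where s: "t + of_int i * a \<in> supp m" "t + of_int i * a \<noteq> t"
      by (rule Fsfun_sigma_ex_other_in_orbit)
    define \<delta> :: "'a \<Rightarrow> int" where "\<delta> v = of_bool (v = t) - of_bool (v = t + of_int i * a)" for v
    define m' where "m' v = m v + (- m t) * \<delta> v" for v
    have "is_coboundary a \<delta>"
      unfolding \<delta>_def by (rule is_coboundary_delta_diff)
    then have "m' \<in> Fsfun_sigma a"
      unfolding m'_def
      by (intro Fsfun_sigma_add[OF less.prems] Fsfun_sigma_mult is_coboundary_imp_Fsfun_sigma)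
    moreover have "card (supp m') < card (supp m)"
    proof (rule psubset_card_mono)
      show "finite (supp m)"
        using less.prems by (simp add: Fsfun_sigma_iff)
      show "supp m' \<subset> supp m"
        using t s by (auto simp: m'_def \<delta>_def supp_def)
    qed
    ultimately have "is_coboundary a m'"
      using less.hyps by blast
    then have "is_coboundary a (\<lambda>v. m' v + m t * \<delta> v)"
      using \<open>is_coboundary a \<delta>\<close> by (intro is_coboundary_add is_coboundary_mult)
    then show ?thesis
      by (simp add: m'_def)
  qed
qed

lemma G_sigma_eq_rf_monic_image:
  fixes a :: "'a::field"
  assumes alg_closed: "\<And>p :: 'a poly. degree p > 0 \<Longrightarrow> \<exists>z. poly p z = 0"
  shows "G_sigma a = rf_monic ` Fsfun_sigma a"
proof (intro equalityI subsetI)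
  fix \<beta>
  assume "\<beta> \<in> G_sigma a"
  then obtain r where "r \<noteq> 0" and \<beta>: "\<beta> = r / rf_shift a r"
    unfolding G_sigma_def by blast
  then obtain c n where "rf_decomp r c n"
    using rf_decomp_exists[OF alg_closed] by blast
  then have "rf_decomp \<beta> 1 (\<lambda>s. n s - n (s + a))"
    unfolding \<beta> by (rule rf_decomp_shift_quotient)
  moreover have "is_coboundary a (\<lambda>s. n s - n (s + a))"
    using \<open>rf_decomp r c n\<close> by (auto simp: is_coboundary_def rf_decomp_iff)
  ultimately show "\<beta> \<in> rf_monic ` Fsfun_sigma a"
    by (auto simp: rf_decomp_1_iff intro!: is_coboundary_imp_Fsfun_sigma)
next
  fix \<beta>
  assume "\<beta> \<in> rf_monic ` Fsfun_sigma a"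
  then obtain m where "m \<in> Fsfun_sigma a" and \<beta>: "\<beta> = rf_monic m"
    by blast
  then obtain n where "finite (supp n)" and m: "m = (\<lambda>s. n s - n (s + a))"
    using Fsfun_sigma_imp_is_coboundary unfolding is_coboundary_def by blast
  have "rf_decomp (rf_monic n / rf_shift a (rf_monic n)) 1 m"
    unfolding m using \<open>finite (supp n)\<close> by (rule rf_decomp_shift_quotient[OF rf_decomp_rf_monic])
  then have "\<beta> = rf_monic n / rf_shift a (rf_monic n)"
    by (simp add: rf_decomp_1_iff \<beta>)
  then show "\<beta> \<in> G_sigma a"
    unfolding G_sigma_def using rf_monic_nonzero by blast
qed

theorem proposition4:
  fixes a :: "'a::field"
  assumes alg_closed: "\<And>p :: 'a poly. degree p > 0 \<Longrightarrow> \<exists>z. poly p z = 0"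
    and a_nz: "a \<noteq> 0"
  shows "bij_betw (\<lambda>\<beta>. (rf_coef \<beta>, rf_mult \<beta>)) (G_sigma a) ({1} \<times> Fsfun_sigma a)
       \<and> (\<forall>\<beta>\<in>G_sigma a. \<forall>\<gamma>\<in>G_sigma a. \<beta> * \<gamma> \<in> G_sigma a \<and> inverse \<beta> \<in> G_sigma a
             \<and> rf_mult (\<beta> * \<gamma>) = (\<lambda>t. rf_mult \<beta> t + rf_mult \<gamma> t))"
proof -
  have G: "G_sigma a = rf_monic ` Fsfun_sigma a"
    using alg_closed by (rule G_sigma_eq_rf_monic_image)
  have fin: "finite (supp m)" if "m \<in> Fsfun_sigma a" for m
    using that by (simp add: Fsfun_sigma_iff)
  have "bij_betw (\<lambda>\<beta>. (rf_coef \<beta>, rf_mult \<beta>)) (G_sigma a) ({1} \<times> Fsfun_sigma a)"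
    unfolding G by (rule bij_betw_byWitness[where f' = "\<lambda>(c, m). rf_monic m"]) (auto simp: fin rf_coef_rf_monic rf_mult_rf_monic)
  moreover have "\<beta> * \<gamma> \<in> G_sigma a \<and> inverse \<beta> \<in> G_sigma a
      \<and> rf_mult (\<beta> * \<gamma>) = (\<lambda>t. rf_mult \<beta> t + rf_mult \<gamma> t)"
    if "\<beta> \<in> G_sigma a" "\<gamma> \<in> G_sigma a" for \<beta> \<gamma>
  proof -
    from that obtain m m' where m: "m \<in> Fsfun_sigma a" "m' \<in> Fsfun_sigma a"
      and \<beta>\<gamma>: "\<beta> = rf_monic m" "\<gamma> = rf_monic m'"
      unfolding G by blast
    then have "\<beta> * \<gamma> = rf_monic (\<lambda>t. m t + m' t)" "inverse \<beta> = rf_monic (\<lambda>t. (-1) * m t)"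
      by (simp_all add: rf_monic_add rf_monic_uminus fin)
    moreover have "(\<lambda>t. m t + m' t) \<in> Fsfun_sigma a"
      using m by (rule Fsfun_sigma_add)
    moreover have "(\<lambda>t. (-1) * m t) \<in> Fsfun_sigma a"
      using m(1) by (rule Fsfun_sigma_mult)
    ultimately show ?thesis
      using m unfolding G \<beta>\<gamma> by (auto simp: fin rf_mult_rf_monic)
  qed
  ultimately show ?thesis
    by blast
qed

end
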